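(* Let $A$ be an abelian group of order $n$. The number of quadruples $(C,Z,S',S'')$ such that $C,Z$ are subgroups of $A$ with $A=C\times Z$, $C$ is cyclic of order $t\geq 4$, $Z$ is an elementary abelian $2$-group, $S'\in\{C,\emptyset,\{1\},C\setminus\{1\}\}$ and $S''\subseteq Z$, is at most $2^{n/4+2\log_2 n-1}$.
   Context: $A=C\times Z$ means $A$ is the internal direct product of its subgroups $C$ and $Z$; the trivial group counts as an elementary abelian $2$-group. *)

theory Defs
  imports Complex_Main "HOL-Algebra.Algebra"
begin

definition internal_dirprod :: "('a, 'b) monoid_scheme \<Rightarrow> 'a set \<Rightarrow> 'a set \<Rightarrow> bool" where
  "internal_dirprod G C Z \<longleftrightarrow> subgroup C G \<and> subgroup Z G \<and>
     C \<inter> Z = {\<one>\<^bsub>G\<^esub>} \<and> C <#>\<^bsub>G\<^esub> Z = carrier G"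

definition elem_abelian_2 :: "('a, 'b) monoid_scheme \<Rightarrow> 'a set \<Rightarrow> bool" where
  "elem_abelian_2 G Z \<longleftrightarrow> subgroup Z G \<and> (\<forall>z\<in>Z. z \<otimes>\<^bsub>G\<^esub> z = \<one>\<^bsub>G\<^esub>)"

end

theory Submission
  imports Defs
begin

text \<open>
  Let \<open>T\<close> be the subgroup of elements of order at most 2 in \<open>A\<close>, and \<open>w = |T|\<close>.
  In a splitting \<open>A = C \<times> Z\<close> the elements of \<open>T\<close> are products of such elements of
  \<open>C\<close> and of \<open>Z\<close>; as the cyclic group \<open>C\<close> has at most two of them, \<open>Z\<close> is a
  subgroup of index at most 2 of the elementary abelian group \<open>T\<close>. Such a subgroup is
  determined by which elements of a generating set of \<open>T\<close> of size at most \<open>log\<^sub>2 w\<close> it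
  contains, so there are at most \<open>w\<close> choices for \<open>Z\<close>. Since \<open>|C| \<ge> 4\<close>, the cyclic
  factor \<open>C\<close> has at least two generators \<open>g, g\<inverse>\<close>, none of them in \<open>T\<close>, and
  distinct factors have disjoint sets of generators, so there are at most \<open>(n - w)/2\<close>
  choices for \<open>C\<close>. Hence there are at most \<open>(n - w) w / 2 \<le> n\<^sup>2/8\<close> pairs
  \<open>(C, Z)\<close>, each admitting at most \<open>4 \<cdot> 2\<^bsup>|Z|\<^esup> \<le> 4 \<cdot> 2\<^bsup>n/4\<^esup>\<close>
  choices of \<open>(S', S'')\<close>.
\<close>

lemma (in group) card_Un_mult_image:
  assumes H: "subgroup H G" "finite H" and x: "x \<in> carrier G" "x \<notin> H"
  shows "card (H \<union> ((\<otimes>) x ` H)) = 2 * card H"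
proof -
  have Hc: "H \<subseteq> carrier G" using H(1) subgroup.subset by blast
  have "H \<inter> ((\<otimes>) x ` H) = {}"
  proof (rule ccontr)
    assume "H \<inter> ((\<otimes>) x ` H) \<noteq> {}"
    then obtain h where h: "h \<in> H" "x \<otimes> h \<in> H" by blast
    then have "(x \<otimes> h) \<otimes> inv h \<in> H" using H(1) by (meson subgroup.m_closed subgroup.m_inv_closed)
    then show False using h x Hc by (auto simp: m_assoc)
  qed
  moreover have "card ((\<otimes>) x ` H) = card H"
    using inj_on_g'[OF Hc x(1)] by (rule card_image)
  ultimately show ?thesis using H(2) by (simp add: card_Un_disjoint)
qed

lemma (in group) index_le_2_mult_mem_iff:
  assumes W: "subgroup W G" "finite W"
    and H: "subgroup H G" "H \<subseteq> W" "card W \<le> 2 * card H"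
    and x: "x \<in> W" and y: "y \<in> W"
  shows "x \<otimes> y \<in> H \<longleftrightarrow> (x \<in> H \<longleftrightarrow> y \<in> H)"
proof -
  have xc: "x \<in> carrier G" and yc: "y \<in> carrier G"
    using subgroup.mem_carrier[OF W(1)] x y by auto
  have closed: "x \<otimes> y \<in> H" if "x \<in> H" "y \<in> H" using subgroup.m_closed[OF H(1) that] .
  have left: "y \<in> H" if "x \<in> H" "x \<otimes> y \<in> H"
    using subgroup.m_closed[OF H(1) subgroup.m_inv_closed[OF H(1) that(1)] that(2)] xc yc
    by (simp add: m_assoc[symmetric])
  have right: "x \<in> H" if "y \<in> H" "x \<otimes> y \<in> H"
    using subgroup.m_closed[OF H(1) that(2) subgroup.m_inv_closed[OF H(1) that(1)]] xc yc
    by (simp add: m_assoc)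
  have outside: "x \<otimes> y \<in> H" if "x \<notin> H" "y \<notin> H"
  proof -
    have sub: "H \<union> ((\<otimes>) x ` H) \<subseteq> W"
      using H(2) W(1) x by (auto intro: subgroup.m_closed)
    have "card (H \<union> ((\<otimes>) x ` H)) = 2 * card H"
      using card_Un_mult_image[OF H(1) finite_subset[OF H(2) W(2)] xc that(1)] .
    then have W_eq: "H \<union> ((\<otimes>) x ` H) = W"
      using card_subset_eq[OF W(2) sub] card_mono[OF W(2) sub] H(3) by linarith
    have "x \<otimes> y \<notin> (\<otimes>) x ` H"
    proof
      assume "x \<otimes> y \<in> (\<otimes>) x ` H"
      then obtain h where "h \<in> H" "x \<otimes> y = x \<otimes> h" by blast
      then show False using that(2) xc yc H(1) subgroup.mem_carrier by fastforce
    qed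
    moreover have "x \<otimes> y \<in> W" using W(1) x y by (rule subgroup.m_closed)
    ultimately show ?thesis using W_eq by blast
  qed
  show ?thesis using closed left right outside by blast
qed

lemma (in group) card_generate_insert:
  assumes B: "B \<subseteq> carrier G" and g: "g \<in> carrier G" "g \<notin> generate G B"
    and fin: "finite (generate G (insert g B))"
  shows "2 * card (generate G B) \<le> card (generate G (insert g B))"
proof -
  have mono: "generate G B \<subseteq> generate G (insert g B)" by (rule mono_generate) blast
  have "g \<in> generate G (insert g B)" by (rule generate.incl) simp
  then have "generate G B \<union> ((\<otimes>) g ` generate G B) \<subseteq> generate G (insert g B)"
    using mono by (auto intro: generate.eng)
  moreover have "card (generate G B \<union> ((\<otimes>) g ` generate G B)) = 2 * card (generate G B)"
    using card_Un_mult_image[OF generate_is_subgroup[OF B] finite_subset[OF mono fin] g] .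
  ultimately show ?thesis using card_mono[OF fin] by metis
qed

lemma (in group) exists_small_generating_set:
  assumes W: "subgroup W G" "finite W"
  shows "\<exists>B\<subseteq>W. generate G B = W \<and> 2 ^ card B \<le> card W"
proof -
  have Wc: "W \<subseteq> carrier G" using W(1) subgroup.subset by blast
  have "\<exists>B'\<subseteq>W. generate G B' = W \<and> 2 ^ card B' \<le> card W"
    if "B \<subseteq> W" "2 ^ card B \<le> card (generate G B)" for B
    using that
  proof (induction "card W - card (generate G B)" arbitrary: B rule: less_induct)
    case (less B)
    have gen_W: "generate G B \<subseteq> W" using generate_subgroup_incl[OF less.prems(1) W(1)] .
    show ?case
    proof (cases "generate G B = W")
      case True
      then show ?thesis using less.prems by metis
    next
      case False
      then obtain g where g: "g \<in> W" "g \<notin> generate G B" using gen_W by blast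
      let ?B' = "insert g B"
      have B'_W: "?B' \<subseteq> W" using less.prems(1) g(1) by blast
      have gen_W': "generate G ?B' \<subseteq> W" using generate_subgroup_incl[OF B'_W W(1)] .
      have doubled: "2 * card (generate G B) \<le> card (generate G ?B')"
        using card_generate_insert less.prems(1) g Wc finite_subset[OF gen_W' W(2)] by blast
      have "g \<notin> B" using g(2) generate.incl[of g B G] by blast
      then have "card ?B' = Suc (card B)" using finite_subset[OF less.prems(1) W(2)] by simp
      then have pow: "2 ^ card ?B' \<le> card (generate G ?B')" using less.prems(2) doubled by simp
      have "generate G B \<noteq> {}" using generate.one by blast
      then have "0 < card (generate G B)"
        using finite_subset[OF gen_W W(2)] by (simp add: card_gt_0_iff)
      then have "card W - card (generate G ?B') < card W - card (generate G B)"
        using doubled card_mono[OF W(2) gen_W'] by linarith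
      then show ?thesis using less.hyps[OF _ B'_W pow] by blast
    qed
  qed
  from this[of "{}"] show ?thesis by (simp add: generate_empty)
qed

lemma (in group) card_index_le_2_subgroups:
  assumes W: "subgroup W G" "finite W" and sq: "\<forall>x\<in>W. x \<otimes> x = \<one>"
  shows "card {H. subgroup H G \<and> H \<subseteq> W \<and> card W \<le> 2 * card H} \<le> card W"
    (is "card ?S \<le> _")
proof -
  obtain B where B: "B \<subseteq> W" "generate G B = W" "2 ^ card B \<le> card W"
    using exists_small_generating_set[OF W] by blast
  have "inj_on (\<lambda>H. B \<inter> H) ?S"
  proof (rule inj_onI)
    fix H1 H2 assume "H1 \<in> ?S" "H2 \<in> ?S" and traces: "B \<inter> H1 = B \<inter> H2"
    then have H1: "subgroup H1 G" "H1 \<subseteq> W" "card W \<le> 2 * card H1"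
      and H2: "subgroup H2 G" "H2 \<subseteq> W" "card W \<le> 2 * card H2" by auto
    have "z \<in> H1 \<longleftrightarrow> z \<in> H2" if "z \<in> generate G B" for z
      using that
    proof (induction z rule: generate.induct)
      case one
      show ?case using subgroup.one_closed[OF H1(1)] subgroup.one_closed[OF H2(1)] by blast
    next
      case (incl h)
      then show ?case using traces by blast
    next
      case (inv h)
      have "h \<in> W" using inv B(1) by blast
      then have "inv h = h"
        using inv_equality[of h h] sq subgroup.mem_carrier[OF W(1)] by blast
      then show ?case using inv traces by auto
    next
      case (eng h1 h2)
      then have "h1 \<in> W" "h2 \<in> W" using B(2) by auto
      then show ?case
        using eng.IH index_le_2_mult_mem_iff[OF W H1] index_le_2_mult_mem_iff[OF W H2] by blast
    qed
    then show "H1 = H2" using B(2) H1(2) H2(2) by blast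
  qed
  then have "card ?S \<le> card (Pow B)"
    by (rule card_inj_on_le) (auto intro: finite_subset[OF B(1) W(2)])
  also have "\<dots> = 2 ^ card B" using finite_subset[OF B(1) W(2)] by (simp add: card_Pow)
  finally show ?thesis using B(3) by linarith
qed

lemma dvd_double_cases:
  fixes t k :: int
  assumes "t > 0" "t dvd 2 * k"
  shows "t dvd k \<or> t dvd (k - t div 2)"
proof -
  obtain a where a: "2 * k = t * a" using assms(2) by (auto elim: dvdE)
  show ?thesis
  proof (cases "even a")
    case True
    then show ?thesis using a by (auto elim: evenE)
  next
    case False
    then obtain b where b: "a = 2 * b + 1" by (auto elim: oddE)
    have "even t" using a False by (metis dvd_triv_left even_mult_iff)
    then obtain s where s: "t = 2 * s" by (auto elim: evenE)
    then have "k - t div 2 = t * b" using a b by (simp add: algebra_simps)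
    then show ?thesis by simp
  qed
qed

lemma (in group) cyclic_subgroup_generator:
  assumes "subgroup C G" "cyclic_group (subgroup_generated G C)"
  obtains g where "g \<in> C" "generate G {g} = C"
proof -
  interpret C: group "subgroup_generated G C" by (rule group_subgroup_generated)
  have carrier: "carrier (subgroup_generated G C) = C"
    using assms(1) by (rule subgroup.carrier_subgroup_generated_subgroup)
  obtain x where x: "x \<in> C"
    and C: "C = range (\<lambda>n::int. x [^]\<^bsub>subgroup_generated G C\<^esub> n)"
    using assms(2) carrier by (auto simp: C.cyclic_group)
  have "C = range (\<lambda>n::int. x [^] n)"
    using C int_pow_subgroup_generated[of x C] x carrier by simp
  then have "generate G {x} = C"
    using generate_pow x subgroup.mem_carrier[OF assms(1)] by auto
  then show thesis using x that by blast
qed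

lemma (in group) generate_inv_singleton:
  assumes "g \<in> carrier G"
  shows "generate G {inv g} = generate G {g}"
proof -
  have "generate G {h} \<subseteq> generate G {inv h}" if "h \<in> carrier G" for h
  proof (rule generate_subgroup_incl)
    show "{h} \<subseteq> generate G {inv h}"
      using generate_m_inv_closed[of "{inv h}" "inv h"] generate.incl[of "inv h" "{inv h}" G] that
      by simp
  qed (simp add: generate_is_subgroup that)
  then show ?thesis using assms by (metis inv_closed inv_inv subset_antisym)
qed

lemma (in group) card_generate_le_2_if_square_one:
  assumes "g \<in> carrier G" "g \<otimes> g = \<one>"
  shows "card (generate G {g}) \<le> 2"
proof -
  have "g [^] (2::nat) = \<one>" using assms by (simp add: numeral_2_eq_2)
  then have "ord g dvd 2" using pow_eq_id[OF assms(1)] by simp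
  then show ?thesis using generate_pow_card[OF assms(1)] by (simp add: dvd_imp_le)
qed

lemma (in group) card_square_roots_one_cyclic:
  assumes g: "g \<in> carrier G" and fin: "finite (generate G {g})"
  shows "card {c \<in> generate G {g}. c \<otimes> c = \<one>} \<le> 2"
proof -
  define t where "t = ord g"
  have "generate G {g} \<noteq> {}" using generate.one by blast
  then have t_pos: "t > 0" using fin generate_pow_card[OF g] t_def by (simp add: card_gt_0_iff)
  have "{c \<in> generate G {g}. c \<otimes> c = \<one>} \<subseteq> {\<one>, g [^] (int t div 2)}"
  proof
    fix c assume c: "c \<in> {c \<in> generate G {g}. c \<otimes> c = \<one>}"
    then obtain k :: int where k: "c = g [^] k" using generate_pow[OF g] by auto
    have "g [^] (2 * k) = c \<otimes> c" using k int_pow_mult[OF g, of k k] by (simp only: mult_2)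
    then have "g [^] (2 * k) = \<one>" using c by simp
    then have "int t dvd 2 * k" using int_pow_eq_id[OF g] t_def by blast
    then have "int t dvd k \<or> int t dvd (k - int t div 2)"
      using dvd_double_cases t_pos by simp
    moreover have "c = \<one>" if "int t dvd k" using that k int_pow_eq_id[OF g] t_def by simp
    moreover have "c = g [^] (int t div 2)" if "int t dvd (k - int t div 2)"
      using that k int_pow_eq[OF g] t_def by (simp add: dvd_diff_commute)
    ultimately show "c \<in> {\<one>, g [^] (int t div 2)}" by blast
  qed
  then have "card {c \<in> generate G {g}. c \<otimes> c = \<one>} \<le> card {\<one>, g [^] (int t div 2)}"
    by (rule card_mono[rotated]) simp
  also have "\<dots> \<le> 2" by (simp add: card_insert_le_m1)
  finally show ?thesis .
qed

lemma (in group) card_internal_dirprod: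
  assumes "internal_dirprod G C Z"
  shows "card C * card Z = order G"
proof -
  have C: "subgroup C G" and Z: "subgroup Z G" and trivial: "C \<inter> Z = {\<one>}"
    and prod: "C <#> Z = carrier G"
    using assms unfolding internal_dirprod_def by auto
  have "inj_on (\<lambda>(c, z). c \<otimes> z) (C \<times> Z)"
  proof (rule inj_onI, clarify)
    fix c z c' z' assume cz: "c \<in> C" "z \<in> Z" "c' \<in> C" "z' \<in> Z" and eq: "c \<otimes> z = c' \<otimes> z'"
    have carr: "c \<in> carrier G" "z \<in> carrier G" "c' \<in> carrier G" "z' \<in> carrier G"
      using cz C Z subgroup.mem_carrier by metis+
    have "inv c' \<otimes> c = inv c' \<otimes> (c \<otimes> z) \<otimes> inv z" using carr by (simp add: m_assoc)
    also have "\<dots> = z' \<otimes> inv z" using carr eq by (simp add: m_assoc[symmetric])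
    finally have "inv c' \<otimes> c = z' \<otimes> inv z" .
    moreover have "inv c' \<otimes> c \<in> C" and "z' \<otimes> inv z \<in> Z"
      using cz C Z by (auto intro: subgroup.m_closed subgroup.m_inv_closed)
    ultimately have "inv c' \<otimes> c \<in> C \<inter> Z" by simp
    then have "\<one> = inv c' \<otimes> c" using trivial by simp
    then have "c = c'" using inv_solve_left[of \<one> c' c] carr by simp
    then show "c = c' \<and> z = z'" using eq carr by simp
  qed
  moreover have "(\<lambda>(c, z). c \<otimes> z) ` (C \<times> Z) = C <#> Z"
    unfolding set_mult_def by auto
  ultimately show ?thesis
    using prod by (metis card_image card_cartesian_product order_def)
qed

definition two_torsion :: "('a, 'b) monoid_scheme \<Rightarrow> 'a set" where
  "two_torsion G = {x \<in> carrier G. x \<otimes>\<^bsub>G\<^esub> x = \<one>\<^bsub>G\<^esub>}"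

lemma (in comm_group) subgroup_two_torsion: "subgroup (two_torsion G) G"
proof (rule subgroupI)
  fix a b assume "a \<in> two_torsion G" "b \<in> two_torsion G"
  then show "a \<otimes> b \<in> two_torsion G"
    unfolding two_torsion_def by (simp add: m_ac)
qed (auto simp: two_torsion_def inv_equality)

lemma (in comm_group) card_two_torsion_internal_dirprod:
  assumes dirprod: "internal_dirprod G C Z" and fin: "finite (carrier G)"
    and Z: "elem_abelian_2 G Z"
  shows "card (two_torsion G) \<le> card {c \<in> C. c \<otimes> c = \<one>} * card Z"
proof -
  have C: "subgroup C G" and prod: "C <#> Z = carrier G"
    using dirprod unfolding internal_dirprod_def by auto
  have Z_sq: "\<forall>z\<in>Z. z \<otimes> z = \<one>" and Zc: "Z \<subseteq> carrier G"
    using Z subgroup.subset unfolding elem_abelian_2_def by auto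
  have finite: "finite C" "finite Z" using C Zc fin subgroup.subset finite_subset by metis+
  have "two_torsion G \<subseteq> (\<lambda>(c, z). c \<otimes> z) ` ({c \<in> C. c \<otimes> c = \<one>} \<times> Z)"
  proof
    fix x assume x: "x \<in> two_torsion G"
    then obtain c z where cz: "c \<in> C" "z \<in> Z" "x = c \<otimes> z"
      using prod unfolding two_torsion_def set_mult_def by blast
    have carr: "c \<in> carrier G" "z \<in> carrier G" using cz C Zc subgroup.mem_carrier by auto
    have "(c \<otimes> c) \<otimes> (z \<otimes> z) = x \<otimes> x" using cz carr by (simp add: m_ac)
    then have "c \<otimes> c = \<one>" using x Z_sq cz carr unfolding two_torsion_def by simp
    then show "x \<in> (\<lambda>(c, z). c \<otimes> z) ` ({c \<in> C. c \<otimes> c = \<one>} \<times> Z)" using cz by auto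
  qed
  then have "card (two_torsion G) \<le> card ((\<lambda>(c, z). c \<otimes> z) ` ({c \<in> C. c \<otimes> c = \<one>} \<times> Z))"
    using finite by (intro card_mono) auto
  also have "\<dots> \<le> card ({c \<in> C. c \<otimes> c = \<one>} \<times> Z)"
    using finite by (intro card_image_le) auto
  finally show ?thesis by (simp add: card_cartesian_product)
qed

definition cyclic_elem2_splittings :: "('a, 'b) monoid_scheme \<Rightarrow> ('a set \<times> 'a set) set" where
  "cyclic_elem2_splittings G = {(C, Z). internal_dirprod G C Z \<and>
     cyclic_group (subgroup_generated G C) \<and> 4 \<le> card C \<and> elem_abelian_2 G Z}"

lemma (in group) finite_cyclic_elem2_splittings:
  assumes "finite (carrier G)"
  shows "finite (cyclic_elem2_splittings G)"
  by (rule finite_subset[of _ "Pow (carrier G) \<times> Pow (carrier G)"])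
    (auto simp: cyclic_elem2_splittings_def internal_dirprod_def assms dest: subgroup.mem_carrier)

lemma (in group) splitting_cyclic_factor_generator:
  assumes "(C, Z) \<in> cyclic_elem2_splittings G"
  obtains g where "g \<in> carrier G" "generate G {g} = C"
proof -
  have C: "subgroup C G" and "cyclic_group (subgroup_generated G C)"
    using assms unfolding cyclic_elem2_splittings_def internal_dirprod_def by auto
  then obtain g where "g \<in> C" "generate G {g} = C" by (rule cyclic_subgroup_generator)
  then show thesis using that subgroup.mem_carrier[OF C] by blast
qed

lemma (in group) card_splitting_elem_factor:
  assumes "(C, Z) \<in> cyclic_elem2_splittings G"
  shows "4 * card Z \<le> order G"
proof -
  have "internal_dirprod G C Z" "4 \<le> card C"
    using assms unfolding cyclic_elem2_splittings_def by auto
  then show ?thesis using card_internal_dirprod by (metis mult_le_mono1)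
qed

lemma (in comm_group) splitting_elem_factor_index_le_2:
  assumes fin: "finite (carrier G)" and CZ: "(C, Z) \<in> cyclic_elem2_splittings G"
  shows "Z \<subseteq> two_torsion G" "card (two_torsion G) \<le> 2 * card Z"
proof -
  have dirprod: "internal_dirprod G C Z" and Z: "elem_abelian_2 G Z"
    using CZ unfolding cyclic_elem2_splittings_def by auto
  show "Z \<subseteq> two_torsion G"
    using Z subgroup.subset unfolding elem_abelian_2_def two_torsion_def by blast
  obtain g where g: "g \<in> carrier G" "generate G {g} = C"
    using splitting_cyclic_factor_generator[OF CZ] .
  have "finite C"
    using finite_subset[OF subgroup.subset fin] dirprod unfolding internal_dirprod_def by blast
  then have "card {c \<in> C. c \<otimes> c = \<one>} \<le> 2" using card_square_roots_one_cyclic g by blast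
  then show "card (two_torsion G) \<le> 2 * card Z"
    using card_two_torsion_internal_dirprod[OF dirprod fin Z] by (meson le_trans mult_le_mono1)
qed

lemma (in comm_group) card_splitting_elem_factors:
  assumes fin: "finite (carrier G)"
  shows "card (snd ` cyclic_elem2_splittings G) \<le> card (two_torsion G)"
proof -
  let ?T = "two_torsion G"
  have T_fin: "finite ?T" using fin unfolding two_torsion_def by simp
  have "snd ` cyclic_elem2_splittings G \<subseteq> {H. subgroup H G \<and> H \<subseteq> ?T \<and> card ?T \<le> 2 * card H}"
  proof
    fix Z assume "Z \<in> snd ` cyclic_elem2_splittings G"
    then obtain C where CZ: "(C, Z) \<in> cyclic_elem2_splittings G" by force
    then have "subgroup Z G"
      unfolding cyclic_elem2_splittings_def elem_abelian_2_def by blast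
    with splitting_elem_factor_index_le_2[OF fin CZ]
    show "Z \<in> {H. subgroup H G \<and> H \<subseteq> ?T \<and> card ?T \<le> 2 * card H}" by blast
  qed
  then have "card (snd ` cyclic_elem2_splittings G)
      \<le> card {H. subgroup H G \<and> H \<subseteq> ?T \<and> card ?T \<le> 2 * card H}"
    using T_fin by (intro card_mono) (auto intro: finite_subset[of _ "Pow ?T"])
  also have "\<dots> \<le> card ?T"
    using card_index_le_2_subgroups[OF subgroup_two_torsion T_fin] by (simp add: two_torsion_def)
  finally show ?thesis .
qed

lemma (in comm_group) card_splitting_cyclic_factors:
  assumes fin: "finite (carrier G)"
  shows "2 * card (fst ` cyclic_elem2_splittings G) \<le> order G - card (two_torsion G)"
proof -
  let ?T = "two_torsion G" and ?CS = "fst ` cyclic_elem2_splittings G"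
  define gens where "gens C = {g \<in> carrier G. generate G {g} = C}" for C
  have gens: "2 \<le> card (gens C) \<and> gens C \<subseteq> carrier G - ?T" if C: "C \<in> ?CS" for C
  proof -
    obtain Z where CZ: "(C, Z) \<in> cyclic_elem2_splittings G" using C by force
    then have C_card: "4 \<le> card C" unfolding cyclic_elem2_splittings_def by blast
    obtain g where g: "g \<in> carrier G" "generate G {g} = C" using splitting_cyclic_factor_generator[OF CZ] .
    have no_torsion: "h \<notin> ?T" if "h \<in> gens C" for h
      using that card_generate_le_2_if_square_one C_card unfolding gens_def two_torsion_def by force
    have "g \<otimes> g \<noteq> \<one>" using no_torsion[of g] g unfolding gens_def two_torsion_def by simp
    then have "inv g \<noteq> g" using r_inv[OF g(1)] by metis
    moreover have "{g, inv g} \<subseteq> gens C" using g generate_inv_singleton unfolding gens_def by simp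
    moreover have "finite (gens C)" using fin unfolding gens_def by simp
    ultimately have "2 \<le> card (gens C)" by (metis card_2_iff card_mono)
    then show ?thesis using no_torsion unfolding gens_def by blast
  qed
  have "2 * card ?CS = (\<Sum>C\<in>?CS. 2)" by simp
  also have "\<dots> \<le> (\<Sum>C\<in>?CS. card (gens C))" using gens by (intro sum_mono) blast
  also have "\<dots> = card (\<Union>C\<in>?CS. gens C)"
    using fin finite_cyclic_elem2_splittings[OF fin]
    by (intro card_UN_disjoint[symmetric]) (auto simp: gens_def)
  also have "\<dots> \<le> card (carrier G - ?T)"
    using gens fin by (intro card_mono) auto
  also have "\<dots> = order G - card ?T"
    unfolding order_def two_torsion_def using fin by (simp add: card_Diff_subset)
  finally show ?thesis .
qed

lemma four_mult_le_square_add: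
  fixes a b :: nat
  shows "4 * a * b \<le> (a + b) ^ 2"
proof -
  have "0 \<le> (int a - int b) ^ 2" by simp
  then have "4 * int a * int b \<le> (int a + int b) ^ 2" by (simp add: power2_eq_square algebra_simps)
  then show ?thesis by (metis of_nat_add of_nat_le_iff of_nat_mult of_nat_numeral of_nat_power)
qed

lemma (in comm_group) card_cyclic_elem2_splittings:
  assumes fin: "finite (carrier G)"
  shows "8 * card (cyclic_elem2_splittings G) \<le> order G ^ 2"
proof -
  let ?S = "cyclic_elem2_splittings G" and ?w = "card (two_torsion G)"
  have "card ?S \<le> card (fst ` ?S \<times> snd ` ?S)"
    using finite_cyclic_elem2_splittings[OF fin] by (intro card_mono) (auto simp: rev_image_eqI)
  then have "8 * card ?S \<le> 4 * (2 * card (fst ` ?S)) * card (snd ` ?S)"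
    by (simp add: card_cartesian_product)
  also have "\<dots> \<le> 4 * (order G - ?w) * ?w"
    using card_splitting_cyclic_factors[OF fin] card_splitting_elem_factors[OF fin]
    by (intro mult_mono) auto
  also have "\<dots> \<le> order G ^ 2"
    using four_mult_le_square_add[of "order G - ?w" ?w]
      card_mono[OF fin, of "two_torsion G"] unfolding order_def two_torsion_def by simp
  finally show ?thesis .
qed

lemma card_decorated_pairs:
  fixes S :: "('a set \<times> 'a set) set" and e :: 'a
  assumes "finite S" and "\<And>C Z. (C, Z) \<in> S \<Longrightarrow> finite Z"
  shows "card {(C, Z, S1, S2). (C, Z) \<in> S \<and> S1 \<in> {C, {}, {e}, C - {e}} \<and> S2 \<subseteq> Z}
    \<le> (\<Sum>(C, Z)\<in>S. 4 * 2 ^ card Z)"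
proof -
  have "{(C, Z, S1, S2). (C, Z) \<in> S \<and> S1 \<in> {C, {}, {e}, C - {e}} \<and> S2 \<subseteq> Z}
      = (\<Union>(C, Z)\<in>S. {C} \<times> {Z} \<times> {C, {}, {e}, C - {e}} \<times> Pow Z)"
    by auto
  also have "card \<dots> \<le> (\<Sum>(C, Z)\<in>S. card ({C} \<times> {Z} \<times> {C, {}, {e}, C - {e}} \<times> Pow Z))"
    using card_UN_le[OF assms(1)] by (simp add: case_prod_beta)
  also have "\<dots> \<le> (\<Sum>(C, Z)\<in>S. 4 * 2 ^ card Z)"
  proof (rule sum_mono, clarify)
    fix C Z assume "(C, Z) \<in> S"
    then have "card (Pow Z) = 2 ^ card Z" using assms(2) by (simp add: card_Pow)
    moreover have "card {C, {}, {e}, C - {e}} \<le> 4" by (simp add: card_insert_if)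
    ultimately show "card ({C} \<times> {Z} \<times> {C, {}, {e}, C - {e}} \<times> Pow Z) \<le> 4 * 2 ^ card Z"
      by (simp add: card_cartesian_product)
  qed
  finally show ?thesis .
qed

lemma two_powr_add_two_log:
  fixes x y :: real
  assumes "x > 0"
  shows "x ^ 2 / 2 * 2 powr y = 2 powr (y + 2 * log 2 x - 1)"
proof -
  have split: "(2::real) powr (a + b - 1) = 2 powr a * 2 powr b / 2" for a b
    by (simp add: powr_diff powr_add)
  have "2 powr log 2 x = x" using assms by simp
  then have "2 powr (2 * log 2 x) = x ^ 2" by (simp only: mult_2 powr_add power2_eq_square)
  then show ?thesis by (simp only: split) simp
qed

lemma (in comm_group) card_decorated_splittings:
  assumes fin: "finite (carrier G)"
  shows "card {(C, Z, S1, S2). (C, Z) \<in> cyclic_elem2_splittings G \<and>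
      S1 \<in> {C, {}, {\<one>}, C - {\<one>}} \<and> S2 \<subseteq> Z}
    \<le> card (cyclic_elem2_splittings G) * 4 * 2 ^ (order G div 4)"
proof -
  let ?S = "cyclic_elem2_splittings G"
  have Z_fin: "finite Z" if "(C, Z) \<in> ?S" for C Z
  proof -
    have "subgroup Z G" using that unfolding cyclic_elem2_splittings_def elem_abelian_2_def by blast
    then show ?thesis using finite_subset[OF subgroup.subset fin] by blast
  qed
  have "card {(C, Z, S1, S2). (C, Z) \<in> ?S \<and> S1 \<in> {C, {}, {\<one>}, C - {\<one>}} \<and> S2 \<subseteq> Z}
      \<le> (\<Sum>(C, Z)\<in>?S. 4 * 2 ^ card Z)"
    using card_decorated_pairs[OF finite_cyclic_elem2_splittings[OF fin] Z_fin] .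
  also have "\<dots> \<le> (\<Sum>(C, Z)\<in>?S. 4 * 2 ^ (order G div 4))"
  proof (intro sum_mono, clarify)
    fix C Z assume "(C, Z) \<in> ?S"
    then have "4 * card Z \<le> order G" by (rule card_splitting_elem_factor)
    then have "card Z \<le> order G div 4" by presburger
    then show "4 * 2 ^ card Z \<le> (4::nat) * 2 ^ (order G div 4)" by simp
  qed
  finally show ?thesis by simp
qed

lemma (in comm_group) card_decorated_cyclic_elem2_splittings:
  assumes fin: "finite (carrier G)"
  shows "real (card {(C, Z, S1, S2).
            internal_dirprod G C Z \<and>
            cyclic_group (subgroup_generated G C) \<and> card C \<ge> 4 \<and>
            elem_abelian_2 G Z \<and>
            S1 \<in> {C, {}, {\<one>}, C - {\<one>}} \<and>
            S2 \<subseteq> Z})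
         \<le> 2 powr (real (order G) / 4 + 2 * log 2 (real (order G)) - 1)"
    (is "real (card ?Q) \<le> _")
proof -
  let ?S = "cyclic_elem2_splittings G" and ?n = "real (order G)"
  have "?Q = {(C, Z, S1, S2). (C, Z) \<in> ?S \<and> S1 \<in> {C, {}, {\<one>}, C - {\<one>}} \<and> S2 \<subseteq> Z}"
    unfolding cyclic_elem2_splittings_def by auto
  then have "real (card ?Q) \<le> real (card ?S * 4 * 2 ^ (order G div 4))"
    using card_decorated_splittings[OF fin] by (simp only: of_nat_le_iff)
  also have "\<dots> \<le> real (card ?S) * 4 * 2 powr (?n / 4)"
  proof -
    have "2 powr real (order G div 4) \<le> 2 powr (?n / 4)" by (simp add: real_of_nat_div)
    then show ?thesis by (simp add: powr_realpow[symmetric] mult_left_mono)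
  qed
  also have "\<dots> \<le> ?n ^ 2 / 2 * 2 powr (?n / 4)"
    using of_nat_mono[OF card_cyclic_elem2_splittings[OF fin], where 'a=real] by simp
  also have "\<dots> = 2 powr (?n / 4 + 2 * log 2 ?n - 1)"
    using fin by (intro two_powr_add_two_log) (simp add: order_gt_0_iff_finite)
  finally show ?thesis .
qed

theorem lemma5p3:
  fixes A :: "('a, 'b) monoid_scheme" and n :: nat
  assumes "comm_group A" and "finite (carrier A)" and "order A = n"
  shows "real (card {(C, Z, S1, S2).
            internal_dirprod A C Z \<and>
            cyclic_group (subgroup_generated A C) \<and> card C \<ge> 4 \<and>
            elem_abelian_2 A Z \<and>
            S1 \<in> {C, {}, {\<one>\<^bsub>A\<^esub>}, C - {\<one>\<^bsub>A\<^esub>}} \<and>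
            S2 \<subseteq> Z})
         \<le> 2 powr (real n / 4 + 2 * log 2 (real n) - 1)"
  using comm_group.card_decorated_cyclic_elem2_splittings[OF assms(1,2)] assms(3) by simp

end
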